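(* Let $A,B,C$ be compact convex sets in the plane with no common point, and let $A'\subset A$, $B'\subset B$, $C'\subset C$ be compact convex sets that are pairwise intersecting. Then $o(A'B'C')=o(ABC)$.
   Context: For three pairwise intersecting compact convex sets $X,Y,Z$ in the plane: $o(XYZ)=0$ if $X\cap Y\cap Z\neq\emptyset$; otherwise $o(XYZ)=o(xyz)$ for any $x\in Y\cap Z$, $y\in X\cap Z$, $z\in X\cap Y$, where for points $o(xyz)=+1$ for a counterclockwise and $-1$ for a clockwise triangle (this is known to be independent of the choice of $x,y,z$). *)

theory Defs
  imports "HOL-Analysis.Analysis"
begin

text \<open>Orientation of a point triple:
  +1 counterclockwise, -1 clockwise (0 for collinear triples, which does not
  occur in the situations where the definition is used).\<close>
definition orient_pts :: "real \<times> real \<Rightarrow> real \<times> real \<Rightarrow> real \<times> real \<Rightarrow> int" where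
  "orient_pts x y z =
     (let d = (fst y - fst x) * (snd z - snd x) - (snd y - snd x) * (fst z - fst x)
      in if d > 0 then 1 else if d < 0 then -1 else 0)"

text \<open>Orientation of three (pairwise intersecting) sets: 0 if they have a common
  point, otherwise the orientation of x \<in> Y \<inter> Z, y \<in> X \<inter> Z, z \<in> X \<inter> Y
  (an arbitrary choice; the paper notes independence of the choice).\<close>
definition orient_sets :: "(real \<times> real) set \<Rightarrow> (real \<times> real) set \<Rightarrow> (real \<times> real) set \<Rightarrow> int" where
  "orient_sets X Y Z =
     (if X \<inter> Y \<inter> Z \<noteq> {} then 0
      else orient_pts (SOME x. x \<in> Y \<inter> Z) (SOME y. y \<in> X \<inter> Z) (SOME z. z \<in> X \<inter> Y))"

end

theory Submission
  imports Defs
begin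

text \<open>Only convexity matters.  For \<open>x \<in> B \<inter> C\<close>, \<open>y \<in> A \<inter> C\<close>, \<open>z \<in> A \<inter> B\<close> with
  \<open>A \<inter> B \<inter> C = {}\<close> the triangle \<open>xyz\<close> is never degenerate: were it collinear, one
  vertex would lie between the other two and hence, by convexity, in all three sets.
  The orientation determinant is affine in each vertex, so moving one vertex inside the
  convex set where it lives cannot change its sign.  Hence \<open>o(ABC)\<close> does not depend on
  the choice of vertices, and vertices chosen for \<open>A' B' C'\<close> are admissible for \<open>A B C\<close>.\<close>

definition orient_det :: "real \<times> real \<Rightarrow> real \<times> real \<Rightarrow> real \<times> real \<Rightarrow> real" where
  "orient_det x y z = (fst y - fst x) * (snd z - snd x) - (snd y - snd x) * (fst z - fst x)"

lemma of_int_orient_pts: "of_int (orient_pts x y z) = sgn (orient_det x y z)"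
  unfolding orient_pts_def orient_det_def Let_def sgn_real_def by simp

lemma orient_pts_eq_iff_sgn_eq:
  "orient_pts x y z = orient_pts x' y' z' \<longleftrightarrow> sgn (orient_det x y z) = sgn (orient_det x' y' z')"
  by (metis of_int_eq_iff of_int_orient_pts)

lemma orient_det_rotate: "orient_det x y z = orient_det y z x"
  unfolding orient_det_def by (simp add: algebra_simps)

lemma orient_det_convex_combination_left:
  "orient_det ((1 - t) *\<^sub>R x + t *\<^sub>R x') y z = (1 - t) * orient_det x y z + t * orient_det x' y z"
  unfolding orient_det_def by (simp add: algebra_simps)

lemma orient_det_eq_0_imp_collinear:
  assumes "orient_det x y z = 0"
  shows "collinear {x, y, z}"
proof (cases "y = z")
  case True
  then show ?thesis by (simp add: collinear_2 insert_commute)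
next
  case False
  define d1 d2 p1 p2 where d_p_defs: "d1 = fst z - fst y" "d2 = snd z - snd y"
    "p1 = fst x - fst y" "p2 = snd x - snd y"
  have "d1 \<noteq> 0 \<or> d2 \<noteq> 0"
    using False by (auto simp: d_p_defs prod_eq_iff)
  then have dd: "d1 * d1 + d2 * d2 \<noteq> 0"
    by (simp add: sum_squares_eq_zero_iff)
  have cross: "p1 * d2 = p2 * d1"
    using assms unfolding orient_det_def d_p_defs by (simp add: algebra_simps)
  \<comment> \<open>\<open>x - y\<close> is its own orthogonal projection onto the direction \<open>z - y\<close>\<close>
  define u where "u = (p1 * d1 + p2 * d2) / (d1 * d1 + d2 * d2)"
  have "(p1 * d1 + p2 * d2) * d1 = p1 * (d1 * d1 + d2 * d2)"
    "(p1 * d1 + p2 * d2) * d2 = p2 * (d1 * d1 + d2 * d2)"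
    using cross by (simp_all add: algebra_simps)
  then have "u * d1 = p1" "u * d2 = p2"
    using dd unfolding u_def by (simp_all add: field_simps)
  then have "x = (1 - u) *\<^sub>R y + u *\<^sub>R z"
    unfolding d_p_defs by (simp add: prod_eq_iff algebra_simps)
  then have "collinear {y, x, z}"
    unfolding collinear_3_expand by (intro disjI2 exI[of _ "1 - u"]) simp
  then show ?thesis
    by (simp add: insert_commute)
qed

lemma orient_det_ne_0:
  assumes "convex A" "convex B" "convex C" "A \<inter> B \<inter> C = {}"
    and "x \<in> B \<inter> C" "y \<in> A \<inter> C" "z \<in> A \<inter> B"
  shows "orient_det x y z \<noteq> 0"
proof
  assume "orient_det x y z = 0"
  then have "x \<in> closed_segment y z \<or> y \<in> closed_segment z x \<or> z \<in> closed_segment x y"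
    using orient_det_eq_0_imp_collinear collinear_between_cases between_mem_segment by blast
  moreover have "closed_segment y z \<subseteq> A" "closed_segment z x \<subseteq> B" "closed_segment x y \<subseteq> C"
    using assms by (simp_all add: closed_segment_subset)
  ultimately show False
    using assms by blast
qed

lemma sgn_orient_det_const_left:
  assumes "convex A" "convex B" "convex C" "A \<inter> B \<inter> C = {}"
    and "x \<in> B \<inter> C" "x' \<in> B \<inter> C" "y \<in> A \<inter> C" "z \<in> A \<inter> B"
  shows "sgn (orient_det x y z) = sgn (orient_det x' y z)"
proof (rule ccontr)
  define a b where a_b_defs: "a = orient_det x y z" "b = orient_det x' y z"
  assume "sgn (orient_det x y z) \<noteq> sgn (orient_det x' y z)"
  moreover have "a \<noteq> 0" "b \<noteq> 0"
    using orient_det_ne_0 assms unfolding a_b_defs by blast+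
  ultimately have "a * b < 0"
    unfolding a_b_defs by (auto simp: sgn_real_def mult_less_0_iff split: if_splits)
  define t where "t = a / (a - b)"
  have "0 \<le> t" "t \<le> 1" and zero: "(1 - t) * a + t * b = 0"
    using \<open>a * b < 0\<close> unfolding t_def by (auto simp: mult_less_0_iff field_simps)
  then have "(1 - t) *\<^sub>R x + t *\<^sub>R x' \<in> B \<inter> C"
    using assms convex_Int[of B C] by (simp add: convexD_alt)
  moreover have "orient_det ((1 - t) *\<^sub>R x + t *\<^sub>R x') y z = 0"
    using zero unfolding orient_det_convex_combination_left a_b_defs .
  ultimately show False
    using orient_det_ne_0[OF assms(1-4) _ assms(7,8)] by blast
qed

lemma sgn_orient_det_choice_independent:
  assumes "convex A" "convex B" "convex C" "A \<inter> B \<inter> C = {}"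
    and "x \<in> B \<inter> C" "x' \<in> B \<inter> C" "y \<in> A \<inter> C" "y' \<in> A \<inter> C"
    and "z \<in> A \<inter> B" "z' \<in> A \<inter> B"
  shows "sgn (orient_det x y z) = sgn (orient_det x' y' z')"
proof -
  have "B \<inter> C \<inter> A = {}" "C \<inter> A \<inter> B = {}"
    using assms(4) by blast+
  have "sgn (orient_det x y z) = sgn (orient_det x' y z)"
    using sgn_orient_det_const_left[of A B C x x' y z] assms by blast
  also have "\<dots> = sgn (orient_det y' z x')"
    using sgn_orient_det_const_left[of B C A y y' z x'] assms \<open>B \<inter> C \<inter> A = {}\<close>
      orient_det_rotate[of x' y z] by auto
  also have "\<dots> = sgn (orient_det z' x' y')"
    using sgn_orient_det_const_left[of C A B z z' x' y'] assms \<open>C \<inter> A \<inter> B = {}\<close>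
      orient_det_rotate[of y' z x'] by auto
  finally show ?thesis
    using orient_det_rotate[of x' y' z'] orient_det_rotate[of y' z' x'] by simp
qed

lemma orient_sets_eq_orient_pts:
  assumes "convex X" "convex Y" "convex Z" "X \<inter> Y \<inter> Z = {}"
    and "x \<in> Y \<inter> Z" "y \<in> X \<inter> Z" "z \<in> X \<inter> Y"
  shows "orient_sets X Y Z = orient_pts x y z"
proof -
  have "(SOME x. x \<in> Y \<inter> Z) \<in> Y \<inter> Z" "(SOME y. y \<in> X \<inter> Z) \<in> X \<inter> Z"
    "(SOME z. z \<in> X \<inter> Y) \<in> X \<inter> Y"
    using assms(5-7) by (metis someI)+
  then have "orient_pts (SOME x. x \<in> Y \<inter> Z) (SOME y. y \<in> X \<inter> Z) (SOME z. z \<in> X \<inter> Y)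
      = orient_pts x y z"
    using sgn_orient_det_choice_independent[OF assms(1-4)] assms(5-7)
    unfolding orient_pts_eq_iff_sgn_eq by blast
  then show ?thesis
    unfolding orient_sets_def using assms(4) by simp
qed

theorem corollary1:
  fixes A B C A' B' C' :: "(real \<times> real) set"
  assumes "compact A" "convex A" "compact B" "convex B" "compact C" "convex C"
    and "A \<inter> B \<inter> C = {}"
    and "A' \<subseteq> A" "B' \<subseteq> B" "C' \<subseteq> C"
    and "compact A'" "convex A'" "compact B'" "convex B'" "compact C'" "convex C'"
    and "A' \<inter> B' \<noteq> {}" "A' \<inter> C' \<noteq> {}" "B' \<inter> C' \<noteq> {}"
  shows "orient_sets A' B' C' = orient_sets A B C"
proof -
  obtain x y z where "x \<in> B' \<inter> C'" "y \<in> A' \<inter> C'" "z \<in> A' \<inter> B'"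
    using assms(17-19) by blast
  moreover have "A' \<inter> B' \<inter> C' = {}"
    using assms(7-10) by blast
  ultimately have "orient_sets A' B' C' = orient_pts x y z"
    using orient_sets_eq_orient_pts[OF assms(12,14,16)] by blast
  moreover have "orient_sets A B C = orient_pts x y z"
    using orient_sets_eq_orient_pts[OF assms(2,4,6,7)] \<open>x \<in> _\<close> \<open>y \<in> _\<close> \<open>z \<in> _\<close>
      assms(8-10) by blast
  ultimately show ?thesis by simp
qed

end
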